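(* For every real $\alpha$ with $0<\alpha<1/2$ there exists a positive constant $c_\alpha$ such that for every real $M\ge 2$, \[ \prod_{p\le M}\Bigl(p^{2\alpha-2}\Bigl(1-\frac1p\Bigr)^{2\alpha}+\frac2p\Bigl(1-\frac1p\Bigr)+\Bigl(1-\frac1p\Bigr)^{2-2\alpha}\Bigr)\ge c_\alpha(\log M)^{2\alpha}, \] where the product runs over primes $p\le M$. *)

theory Defs
  imports Complex_Main "HOL-Computational_Algebra.Primes"
begin

end

theory Submission
  imports Defs "HOL-Analysis.Harmonic_Numbers"
begin

text \<open>Write \<open>q = 1 - 1/p\<close>. Since \<open>2 - 2\<alpha> \<ge> 1\<close>, the middle term dominates \<open>2 q\<^bsup>2-2\<alpha>\<^esup>/p\<close>,
  so the factor at \<open>p\<close> is at least \<open>q\<^bsup>2-2\<alpha>\<^esup>(1 + 2/p) = q\<^bsup>-2\<alpha>\<^esup> q\<^sup>2 (1 + 2/p) \<ge>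
  (p/(p-1))\<^bsup>2\<alpha>\<^esup> (1 - 1/p\<^sup>2)\<^sup>3\<close>. Over the primes \<open>p \<le> N\<close>, the product of \<open>1 - 1/p\<^sup>2\<close> is at least
  \<open>1/2\<close> by telescoping over all \<open>2 \<le> n \<le> N\<close>, and the product of \<open>p/(p-1)\<close> is at least
  \<open>ln (N + 1)\<close>, because the product of the truncated geometric series \<open>\<Sum>\<^sub>k p\<^sup>-\<^sup>k\<close> contains every
  term \<open>1/n\<close> of the harmonic sum \<open>H\<^sub>N\<close>. Hence the product is at least \<open>(ln M)\<^bsup>2\<alpha>\<^esup>/8\<close>.\<close>

definition euler_factor :: "real \<Rightarrow> real \<Rightarrow> real" where
  "euler_factor \<alpha> p = p powr (2*\<alpha> - 2) * (1 - 1/p) powr (2*\<alpha>) + 2/p * (1 - 1/p)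
     + (1 - 1/p) powr (2 - 2*\<alpha>)"

lemma cube_one_minus_square_le:
  fixes x :: real
  assumes "0 \<le> x"
  shows "(1 - x^2)^3 \<le> (1 - x)^2 * (1 + 2*x)"
proof -
  have "(1 - x^2)^3 = (1 - x)^2 * (1 + 2*x) - (1 - x)^2 * (2*x^3 + x^4)"
    by (simp add: power2_eq_square power3_eq_cube power4_eq_xxxx algebra_simps)
  moreover have "0 \<le> (1 - x)^2 * (2*x^3 + x^4)"
    using assms by simp
  ultimately show ?thesis by linarith
qed

lemma euler_factor_ge:
  fixes \<alpha> p :: real
  assumes "\<alpha> \<le> 1/2" and "p > 1"
  shows "(p / (p - 1)) powr (2*\<alpha>) * (1 - 1/p^2)^3 \<le> euler_factor \<alpha> p"
proof -
  define q where "q = 1 - 1/p"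
  have q: "0 < q" "q \<le> 1"
    using assms(2) by (auto simp: q_def field_simps)
  have ratio: "(p / (p - 1)) powr (2*\<alpha>) = q powr (-(2*\<alpha>))"
  proof -
    have "p / (p - 1) = inverse q"
      using assms(2) by (simp add: q_def field_simps)
    then show ?thesis by (simp add: inverse_powr powr_minus)
  qed
  have split_power: "q powr (2 - 2*\<alpha>) = q powr (-(2*\<alpha>)) * q^2"
  proof -
    have "q powr (2 - 2*\<alpha>) = q powr (-(2*\<alpha>)) * q powr 2"
      by (simp add: powr_add[symmetric])
    then show ?thesis using q by simp
  qed
  have "q powr (2 - 2*\<alpha>) \<le> q"
    using powr_mono'[of 1 "2 - 2*\<alpha>" q] q assms(1) by simp
  then have "2/p * q powr (2 - 2*\<alpha>) \<le> 2/p * q"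
    using assms(2) by (intro mult_left_mono) auto
  moreover have "0 \<le> p powr (2*\<alpha> - 2) * q powr (2*\<alpha>)" by simp
  moreover have "q powr (2 - 2*\<alpha>) * (1 + 2/p) = q powr (2 - 2*\<alpha>) + 2/p * q powr (2 - 2*\<alpha>)"
    by (simp add: algebra_simps)
  ultimately have dominant: "q powr (2 - 2*\<alpha>) * (1 + 2/p) \<le> euler_factor \<alpha> p"
    unfolding euler_factor_def q_def[symmetric] by linarith
  have "(1 - 1/p^2)^3 \<le> q^2 * (1 + 2/p)"
    using cube_one_minus_square_le[of "1/p"] assms(2) by (simp add: q_def power_one_over)
  then have "(p / (p - 1)) powr (2*\<alpha>) * (1 - 1/p^2)^3 \<le> q powr (-(2*\<alpha>)) * (q^2 * (1 + 2/p))"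
    unfolding ratio by (rule mult_left_mono) simp
  also have "\<dots> = q powr (2 - 2*\<alpha>) * (1 + 2/p)"
    by (simp add: split_power)
  finally show ?thesis using dominant by linarith
qed

lemma one_minus_inverse_square_bounds:
  fixes x :: real
  assumes "x \<ge> 1"
  shows "0 \<le> 1 - 1 / x^2 \<and> 1 - 1 / x^2 \<le> 1"
proof -
  have "1 \<le> x^2" using assms by (simp add: one_le_power)
  then show ?thesis using divide_le_eq_1[of 1 "x^2"] by auto
qed

lemma prod_one_minus_inverse_square:
  "(\<Prod>n\<in>{2..Suc m}. 1 - 1 / (real n)^2) = (real m + 2) / (2 * real m + 2)"
proof (induction m)
  case (Suc m)
  have "{2..Suc (Suc m)} = insert (Suc (Suc m)) {2..Suc m}" by auto
  then have "(\<Prod>n\<in>{2..Suc (Suc m)}. 1 - 1 / (real n)^2)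
      = (1 - 1 / (real m + 2)^2) * ((real m + 2) / (2 * real m + 2))"
    using Suc by (simp add: add.commute)
  also have "\<dots> = (real (Suc m) + 2) / (2 * real (Suc m) + 2)"
  proof -
    define a where "a = real m + 2"
    have "a > 1" by (simp add: a_def)
    then have "(1 - 1 / a^2) * (a / (2 * a - 2)) = (a + 1) / (2 * a)"
      by (simp add: field_simps power2_eq_square)
    then show ?thesis by (simp add: a_def algebra_simps)
  qed
  finally show ?case .
qed simp

lemma prod_one_minus_inverse_square_ge:
  assumes "P \<subseteq> {2..N}"
  shows "(\<Prod>n\<in>P. 1 - 1 / (real n)^2) \<ge> 1/2"
proof (cases N)
  case (Suc m)
  have "1/2 \<le> (real m + 2) / (2 * real m + 2)"
    by (simp add: divide_simps)
  also have "\<dots> = (\<Prod>n\<in>{2..N}. 1 - 1 / (real n)^2)"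
    unfolding Suc by (rule prod_one_minus_inverse_square[symmetric])
  also have "\<dots> = (\<Prod>n\<in>P. 1 - 1 / (real n)^2) * (\<Prod>n\<in>{2..N} - P. 1 - 1 / (real n)^2)"
    using assms by (simp add: prod.subset_diff mult.commute)
  also have "\<dots> \<le> (\<Prod>n\<in>P. 1 - 1 / (real n)^2)"
    using assms one_minus_inverse_square_bounds
    by (intro mult_right_le_one_le prod_nonneg prod_le_1) auto
  finally show ?thesis .
qed (use assms in simp)

lemma sum_inverse_powers_le:
  fixes x :: real
  assumes "x > 1"
  shows "(\<Sum>k\<le>n. (1/x)^k) \<le> x / (x - 1)"
proof -
  have small: "norm (1/x) < 1" using assms by simp
  have "(\<Sum>k\<le>n. (1/x)^k) \<le> (\<Sum>k. (1/x)^k)"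
    using small assms by (intro sum_le_suminf summable_geometric) auto
  also have "\<dots> = x / (x - 1)"
    using suminf_geometric[OF small] assms by (simp add: field_simps)
  finally show ?thesis .
qed

lemma prod_multiplicity_superset:
  fixes n :: nat
  assumes "finite P" "\<And>p. p \<in> P \<Longrightarrow> prime p" "prime_factors n \<subseteq> P" "n > 0"
  shows "(\<Prod>p\<in>P. p ^ multiplicity p n) = n"
proof -
  have "(\<Prod>p\<in>P. p ^ multiplicity p n) = (\<Prod>p\<in>prime_factors n. p ^ multiplicity p n)"
    using assms(1-3)
    by (intro prod.mono_neutral_right) (auto simp: not_dvd_imp_multiplicity_0 in_prime_factors_iff)
  also have "\<dots> = n"
    using assms(4) by (simp add: prime_factorization_nat[symmetric])
  finally show ?thesis .
qed

lemma multiplicity_less_self: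
  fixes n p :: nat
  assumes "n > 0" "p > 1"
  shows "multiplicity p n < n"
proof (rule multiplicity_lessI)
  have "n < 2 ^ n" by (rule less_exp)
  also have "\<dots> \<le> p ^ n" using assms(2) by (intro power_mono) auto
  finally show "\<not> p ^ n dvd n" using assms(1) by (auto dest: dvd_imp_le)
qed (use assms in auto)

text \<open>Each \<open>n \<le> N\<close> is encoded by its exponent vector over the primes \<open>p \<le> N\<close>, which is a point
  of \<open>{..N}\<^sup>P\<close>; expanding the product of the truncated geometric series gives a sum over all
  such points.\<close>

lemma harm_le_prod_prime_power_sums:
  fixes N :: nat
  defines "P \<equiv> {p. prime p \<and> p \<le> N}"
  shows "harm N \<le> (\<Prod>p\<in>P. \<Sum>k\<le>N. (1 / real p)^k)"
proof -
  define e where "e n = restrict (\<lambda>p. multiplicity p n) P" for n :: nat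
  have finite_P: "finite P" unfolding P_def by (rule finite_subset[of _ "{..N}"]) auto
  have primes_P: "\<And>p. p \<in> P \<Longrightarrow> prime p" unfolding P_def by simp
  have factors_in_P: "prime_factors n \<subseteq> P" if "n \<in> {1..N}" for n
  proof
    fix p assume "p \<in> prime_factors n"
    then have "prime p" "p \<le> n"
      using that by (auto simp: in_prime_factors_iff dvd_imp_le)
    then show "p \<in> P" using that by (simp add: P_def)
  qed
  have decomposition: "n = (\<Prod>p\<in>P. p ^ e n p)" if "n \<in> {1..N}" for n
  proof -
    have "(\<Prod>p\<in>P. p ^ e n p) = (\<Prod>p\<in>P. p ^ multiplicity p n)"
      by (rule prod.cong) (simp_all add: e_def)
    also have "\<dots> = n"
      using that by (intro prod_multiplicity_superset finite_P primes_P factors_in_P) auto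
    finally show ?thesis by simp
  qed
  have inj: "inj_on e {1..N}"
    by (rule inj_onI) (metis decomposition)
  have range: "e ` {1..N} \<subseteq> PiE P (\<lambda>_. {..N})"
  proof (rule image_subsetI)
    fix n assume n: "n \<in> {1..N}"
    have "multiplicity p n \<le> N" if "p \<in> P" for p
      using multiplicity_less_self[of n p] prime_gt_1_nat[OF primes_P[OF that]] n by simp
    then show "e n \<in> PiE P (\<lambda>_. {..N})" by (simp add: e_def)
  qed
  have reciprocal: "(\<Prod>p\<in>P. (1 / real p) ^ e n p) = 1 / real n" if "n \<in> {1..N}" for n
    by (subst decomposition[OF that]) (simp add: power_one_over prod_dividef)
  have "harm N = (\<Sum>n\<in>{1..N}. \<Prod>p\<in>P. (1 / real p) ^ e n p)"
    unfolding harm_def using reciprocal by (simp add: inverse_eq_divide)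
  also have "\<dots> = (\<Sum>f\<in>e ` {1..N}. \<Prod>p\<in>P. (1 / real p) ^ f p)"
    by (rule sum.reindex[OF inj, symmetric, unfolded comp_def])
  also have "\<dots> \<le> (\<Sum>f\<in>PiE P (\<lambda>_. {..N}). \<Prod>p\<in>P. (1 / real p) ^ f p)"
    using range finite_P by (intro sum_mono2 finite_PiE prod_nonneg) auto
  also have "\<dots> = (\<Prod>p\<in>P. \<Sum>k\<le>N. (1 / real p)^k)"
    using finite_P by (intro prod_sum_PiE[symmetric]) auto
  finally show ?thesis .
qed

lemma ln_le_prod_primes:
  fixes N :: nat
  shows "ln (real N + 1) \<le> (\<Prod>p\<in>{p. prime p \<and> p \<le> N}. real p / (real p - 1))"
proof -
  have "ln (real N + 1) \<le> harm N" by (rule ln_le_harm)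
  also have "\<dots> \<le> (\<Prod>p\<in>{p. prime p \<and> p \<le> N}. \<Sum>k\<le>N. (1 / real p)^k)"
    by (rule harm_le_prod_prime_power_sums)
  also have "\<dots> \<le> (\<Prod>p\<in>{p. prime p \<and> p \<le> N}. real p / (real p - 1))"
    using prime_gt_1_nat by (intro prod_mono conjI sum_nonneg sum_inverse_powers_le) auto
  finally show ?thesis .
qed

lemma prod_euler_factor_ge:
  fixes \<alpha> :: real
  assumes "0 \<le> \<alpha>" "\<alpha> \<le> 1/2"
  shows "(ln (real N + 1)) powr (2*\<alpha>) / 8 \<le> (\<Prod>p\<in>{p. prime p \<and> p \<le> N}. euler_factor \<alpha> (real p))"
    (is "_ \<le> (\<Prod>p\<in>?S. _)")
proof -
  have primes: "?S \<subseteq> {2..N}" using prime_ge_2_nat by auto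
  have ratio_nonneg: "0 \<le> real p / (real p - 1)" if "p \<in> ?S" for p
    using that prime_gt_1_nat[of p] by simp
  have "(ln (real N + 1)) powr (2*\<alpha>) \<le> (\<Prod>p\<in>?S. real p / (real p - 1)) powr (2*\<alpha>)"
    using ln_le_prod_primes assms by (intro powr_mono2) auto
  moreover have "(1/2)^3 \<le> (\<Prod>p\<in>?S. 1 - 1 / (real p)^2)^3"
    using prod_one_minus_inverse_square_ge[OF primes] by (intro power_mono) auto
  ultimately have "(ln (real N + 1)) powr (2*\<alpha>) * (1/2)^3
      \<le> (\<Prod>p\<in>?S. real p / (real p - 1)) powr (2*\<alpha>) * (\<Prod>p\<in>?S. 1 - 1 / (real p)^2)^3"
    by (rule mult_mono) simp_all
  also have "\<dots> = (\<Prod>p\<in>?S. (real p / (real p - 1)) powr (2*\<alpha>) * (1 - 1 / (real p)^2)^3)"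
    using ratio_nonneg by (simp add: prod.distrib prod_powr_distrib prod_power_distrib)
  also have "\<dots> \<le> (\<Prod>p\<in>?S. euler_factor \<alpha> (real p))"
  proof (rule prod_mono)
    fix p assume "p \<in> ?S"
    then have "2 \<le> p" using prime_ge_2_nat by simp
    then have p: "real p \<ge> 2" by simp
    then have "0 \<le> 1 - 1 / (real p)^2" using one_minus_inverse_square_bounds by simp
    then show "0 \<le> (real p / (real p - 1)) powr (2*\<alpha>) * (1 - 1 / (real p)^2)^3 \<and>
        (real p / (real p - 1)) powr (2*\<alpha>) * (1 - 1 / (real p)^2)^3 \<le> euler_factor \<alpha> (real p)"
      using euler_factor_ge[OF assms(2)] p by simp
  qed
  finally show ?thesis by (simp add: power3_eq_cube)
qed

theorem lemma7:
  fixes \<alpha> :: real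
  assumes "0 < \<alpha>" and "\<alpha> < 1/2"
  shows "\<exists>c>0. \<forall>M::real. M \<ge> 2 \<longrightarrow>
    (\<Prod>p\<in>{p::nat. prime p \<and> real p \<le> M}.
        real p powr (2*\<alpha> - 2) * (1 - 1 / real p) powr (2*\<alpha>)
        + 2 / real p * (1 - 1 / real p)
        + (1 - 1 / real p) powr (2 - 2*\<alpha>))
      \<ge> c * (ln M) powr (2*\<alpha>)"
  unfolding euler_factor_def[symmetric]
proof (intro exI[of _ "1/8"] conjI allI impI)
  fix M :: real assume M: "M \<ge> 2"
  define N where "N = nat \<lfloor>M\<rfloor>"
  have primes: "{p::nat. prime p \<and> real p \<le> M} = {p. prime p \<and> p \<le> N}"
    using M by (auto simp: N_def le_nat_iff le_floor_iff)
  have "M \<le> real N + 1"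
    using M by (simp add: N_def)
  then have "ln M \<le> ln (real N + 1)"
    using M by simp
  then have "1/8 * (ln M) powr (2*\<alpha>) \<le> (ln (real N + 1)) powr (2*\<alpha>) / 8"
    using M assms by (auto intro: powr_mono2)
  also have "\<dots> \<le> (\<Prod>p\<in>{p. prime p \<and> p \<le> N}. euler_factor \<alpha> (real p))"
    using assms by (intro prod_euler_factor_ge) auto
  finally show "1/8 * (ln M) powr (2*\<alpha>) \<le> (\<Prod>p\<in>{p. prime p \<and> real p \<le> M}. euler_factor \<alpha> (real p))"
    unfolding primes .
qed simp

end
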